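(* Let $C$ be a cycle of length at least 4 in a 3-connected graph $F$, and let $K$ be (the vertex set of) a connected component of the reduced conflict graph $\mathrm{Con}^-(C)$. Then every vertex of $C$ belongs to $\mathrm{att}(K)=\bigcup_{X\in K}\mathrm{att}(X)$.
   Context: Let $F$ be a graph and $C$ a cycle of $F$. A $C$-bridge is either a chord of $C$ (an edge not in $C$ with both endpoints on $C$) or a connected component of $F-V(C)$ together with all edges joining it to $C$ and their endpoints on $C$. The attachments $\mathrm{att}(X)$ of a $C$-bridge $X$ are the vertices of $C$ incident to edges of $X$. Two pairs $\{x,y\}$, $\{u,v\}$ of four distinct vertices of $C$ alternate if each of the two arcs of $C$ with endpoints $x,y$ contains exactly one of $u,v$; two vertex sets $X,U\subseteq V(C)$ alternate if some pair from $X$ alternates with some pair from $U$. Two $C$-bridges have a four-vertex conflict if their attachment sets alternate. The reduced conflict graph $\mathrm{Con}^-(C)$ has the $C$-bridges as vertices, two adjacent iff they have a four-vertex conflict. *)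

theory Defs
  imports Main
begin

definition simple_graph :: "'a set \<Rightarrow> 'a set set \<Rightarrow> bool" where
  "simple_graph V E \<longleftrightarrow> finite V \<and>
     (\<forall>e\<in>E. \<exists>u v. e = {u, v} \<and> u \<noteq> v \<and> u \<in> V \<and> v \<in> V)"

definition adj_in :: "'a set set \<Rightarrow> 'a set \<Rightarrow> ('a \<times> 'a) set" where
  "adj_in E W = {(x, y). {x, y} \<in> E \<and> x \<in> W \<and> y \<in> W}"

definition connected_set :: "'a set set \<Rightarrow> 'a set \<Rightarrow> bool" where
  "connected_set E W \<longleftrightarrow> (\<forall>u\<in>W. \<forall>v\<in>W. (u, v) \<in> (adj_in E W)\<^sup>*)"

definition k_connected :: "nat \<Rightarrow> 'a set \<Rightarrow> 'a set set \<Rightarrow> bool" where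
  "k_connected k V E \<longleftrightarrow> simple_graph V E \<and> card V > k \<and>
     (\<forall>S. S \<subseteq> V \<longrightarrow> card S < k \<longrightarrow> connected_set E (V - S))"

definition is_cycle :: "'a set \<Rightarrow> 'a set set \<Rightarrow> 'a list \<Rightarrow> bool" where
  "is_cycle V E cs \<longleftrightarrow> distinct cs \<and> length cs \<ge> 3 \<and> set cs \<subseteq> V \<and>
     (\<forall>i < length cs. {cs ! i, cs ! (Suc i mod length cs)} \<in> E)"

definition cycle_edges :: "'a list \<Rightarrow> 'a set set" where
  "cycle_edges cs = {{cs ! i, cs ! (Suc i mod length cs)} | i. i < length cs}"

definition component_of :: "'a set set \<Rightarrow> 'a set \<Rightarrow> 'a set \<Rightarrow> bool" where
  "component_of E W H \<longleftrightarrow> (\<exists>v\<in>W. H = {u \<in> W. (v, u) \<in> (adj_in E W)\<^sup>*})"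

text \<open>A C-bridge is represented as a pair (vertex set, edge set).
  Chords: (e, {e}).  Component bridges: the component H together with all edges
  incident with H and their endpoints on C.\<close>
definition bridges :: "'a set \<Rightarrow> 'a set set \<Rightarrow> 'a list \<Rightarrow> ('a set \<times> 'a set set) set" where
  "bridges V E cs =
     {(e, {e}) | e. e \<in> E \<and> e \<notin> cycle_edges cs \<and> e \<subseteq> set cs}
   \<union> {(H \<union> {v \<in> set cs. \<exists>u\<in>H. {u, v} \<in> E}, {e \<in> E. e \<inter> H \<noteq> {}}) | H.
        component_of E (V - set cs) H}"

definition att :: "'a list \<Rightarrow> ('a set \<times> 'a set set) \<Rightarrow> 'a set" where
  "att cs X = set cs \<inter> \<Union> (snd X)"

text \<open>w lies strictly inside the arc of the cycle list between x and y
  (the arc not passing through the wrap-around position).\<close>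
definition inside_arc :: "'a list \<Rightarrow> 'a \<Rightarrow> 'a \<Rightarrow> 'a \<Rightarrow> bool" where
  "inside_arc cs x y w \<longleftrightarrow> (\<exists>i j k. i < length cs \<and> j < length cs \<and> k < length cs \<and>
      cs ! i = x \<and> cs ! j = y \<and> cs ! k = w \<and> min i j < k \<and> k < max i j)"

text \<open>Pairs {x,y} and {u,v} of four distinct vertices of C alternate: each of the
  two arcs between x and y contains exactly one of u, v.\<close>
definition pairs_alternate :: "'a list \<Rightarrow> 'a \<Rightarrow> 'a \<Rightarrow> 'a \<Rightarrow> 'a \<Rightarrow> bool" where
  "pairs_alternate cs x y u v \<longleftrightarrow> distinct [x, y, u, v] \<and> {x, y, u, v} \<subseteq> set cs \<and>
     (inside_arc cs x y u \<noteq> inside_arc cs x y v)"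

definition sets_alternate :: "'a list \<Rightarrow> 'a set \<Rightarrow> 'a set \<Rightarrow> bool" where
  "sets_alternate cs X U \<longleftrightarrow>
     (\<exists>x\<in>X. \<exists>y\<in>X. \<exists>u\<in>U. \<exists>v\<in>U. pairs_alternate cs x y u v)"

definition conflict_rel :: "'a set \<Rightarrow> 'a set set \<Rightarrow> 'a list \<Rightarrow>
    (('a set \<times> 'a set set) \<times> ('a set \<times> 'a set set)) set" where
  "conflict_rel V E cs = {(X, Y). X \<in> bridges V E cs \<and> Y \<in> bridges V E cs \<and> X \<noteq> Y \<and>
     sets_alternate cs (att cs X) (att cs Y)}"

definition conflict_component :: "'a set \<Rightarrow> 'a set set \<Rightarrow> 'a list \<Rightarrow>
    ('a set \<times> 'a set set) set \<Rightarrow> bool" where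
  "conflict_component V E cs K \<longleftrightarrow>
     (\<exists>X0 \<in> bridges V E cs. K = {Y. (X0, Y) \<in> (conflict_rel V E cs)\<^sup>*})"

end

theory Submission
  imports Defs
begin

(*
  Rotating the list of cycle vertices changes neither the C-bridges, nor
  their attachments, nor the alternation relation, so we may assume that a vertex missed
  by A = att(K) sits at position 0.  A bridge whose attachments lie in a set S of at most
  two cycle vertices is the chord S (few_attachments_chord), because S does not separate
  the 3-connected graph; this settles the case |A| <= 1.  Otherwise let pb < pa be the
  first and last positions of A, so 0 < pb.  Key lemma (no_straddling_bridge): no bridge Y
  attaches both strictly outside [pb, pa] and strictly inside it, since then every bridge
  of K lies weakly on one side of an inner attachment r of Y (else it conflicts with Y,
  putting Y into K), conflicts never cross r, yet K has bridges attaching at pb and at pa.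
  Hence the outer arc together with its attached components is closed under adjacency in
  the connected graph F - {cs!pb, cs!pa}, so it is everything and pa = pb + 1
  (attachment_span_adjacent).  Finally att(K) cannot be the two ends of a cycle edge
  (attachments_not_cycle_edge).
*)

subsection \<open>Positions on a cycle list\<close>

lemma inside_arc_nth:
  assumes "distinct cs" "i < length cs" "j < length cs" "k < length cs"
  shows "inside_arc cs (cs ! i) (cs ! j) (cs ! k) \<longleftrightarrow> min i j < k \<and> k < max i j"
proof
  assume "inside_arc cs (cs ! i) (cs ! j) (cs ! k)"
  then obtain i' j' k' where "i' < length cs" "j' < length cs" "k' < length cs"
      "cs ! i' = cs ! i" "cs ! j' = cs ! j" "cs ! k' = cs ! k" "min i' j' < k'" "k' < max i' j'"
    unfolding inside_arc_def by blast
  with assms show "min i j < k \<and> k < max i j" by (simp add: nth_eq_iff_index_eq)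
next
  assume "min i j < k \<and> k < max i j"
  with assms show "inside_arc cs (cs ! i) (cs ! j) (cs ! k)" unfolding inside_arc_def by blast
qed

definition cyclic_order :: "nat \<Rightarrow> nat \<Rightarrow> nat \<Rightarrow> bool" where
  "cyclic_order i j k \<longleftrightarrow> i < j \<and> j < k \<or> j < k \<and> k < i \<or> k < i \<and> i < j"

(* Lying between two positions, expressed through the (rotation invariant) cyclic order. *)
lemma between_cyclic_order:
  "distinct [i, j, k :: nat] \<Longrightarrow> (min i j < k \<and> k < max i j) \<longleftrightarrow> (cyclic_order i k j \<longleftrightarrow> i < j)"
  unfolding cyclic_order_def by (auto simp: min_def max_def)

lemma pairs_alternate_nth:
  assumes "distinct cs" "i1 < length cs" "i2 < length cs" "i3 < length cs" "i4 < length cs"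
    and "distinct [i1, i2, i3, i4]"
  shows "pairs_alternate cs (cs ! i1) (cs ! i2) (cs ! i3) (cs ! i4) \<longleftrightarrow>
    cyclic_order i1 i3 i2 \<noteq> cyclic_order i1 i4 i2"
proof -
  have "distinct [cs ! i1, cs ! i2, cs ! i3, cs ! i4]"
    using assms by (auto simp: nth_eq_iff_index_eq)
  moreover have "{cs ! i1, cs ! i2, cs ! i3, cs ! i4} \<subseteq> set cs" using assms by auto
  moreover have "inside_arc cs (cs ! i1) (cs ! i2) (cs ! i3) \<longleftrightarrow> (cyclic_order i1 i3 i2 \<longleftrightarrow> i1 < i2)"
    using assms inside_arc_nth[of cs i1 i2 i3] between_cyclic_order[of i1 i2 i3] by simp
  moreover have "inside_arc cs (cs ! i1) (cs ! i2) (cs ! i4) \<longleftrightarrow> (cyclic_order i1 i4 i2 \<longleftrightarrow> i1 < i2)"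
    using assms inside_arc_nth[of cs i1 i2 i4] between_cyclic_order[of i1 i2 i4] by simp
  ultimately show ?thesis unfolding pairs_alternate_def by blast
qed

(* The predecessor of a position modulo n; rotate1 moves every vertex one position back. *)
definition cyc_pred :: "nat \<Rightarrow> nat \<Rightarrow> nat" where
  "cyc_pred n i = (if i = 0 then n - 1 else i - 1)"

lemma cyc_pred_less: "i < n \<Longrightarrow> cyc_pred n i < n"
  and Suc_cyc_pred_mod: "i < n \<Longrightarrow> Suc (cyc_pred n i) mod n = i"
  unfolding cyc_pred_def by auto

lemma nth_rotate1_cyc_pred: "i < length cs \<Longrightarrow> rotate1 cs ! cyc_pred (length cs) i = cs ! i"
  by (simp add: nth_rotate1 cyc_pred_less Suc_cyc_pred_mod)

lemma cyclic_order_cyc_pred: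
  assumes "a < n" "b < n" "c < n" "distinct [a, b, c]"
  shows "cyclic_order (cyc_pred n a) (cyc_pred n b) (cyc_pred n c) \<longleftrightarrow> cyclic_order a b c"
proof -
  have rotate: "cyclic_order i j k \<longleftrightarrow> cyclic_order j k i" for i j k
    unfolding cyclic_order_def by auto
  have shift: "cyclic_order (cyc_pred n i) (cyc_pred n j) (cyc_pred n k) \<longleftrightarrow> cyclic_order i j k"
    if "i < n" "j < n" "k < n" "distinct [i, j, k]" "j \<noteq> 0" "k \<noteq> 0" for i j k
    using that unfolding cyc_pred_def cyclic_order_def by auto
  show ?thesis
    using shift[of a b c] shift[of b c a] shift[of c a b] rotate assms by (metis distinct_length_2_or_more)
qed

lemma pairs_alternate_rotate1:
  assumes dist: "distinct cs"
  shows "pairs_alternate (rotate1 cs) x y u v \<longleftrightarrow> pairs_alternate cs x y u v"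
proof (cases "distinct [x, y, u, v] \<and> {x, y, u, v} \<subseteq> set cs")
  case False
  then show ?thesis unfolding pairs_alternate_def by auto
next
  case True
  let ?n = "length cs" and ?g = "cyc_pred (length cs)"
  from True obtain i1 i2 i3 i4 where ix: "i1 < ?n" "i2 < ?n" "i3 < ?n" "i4 < ?n"
      "x = cs ! i1" "y = cs ! i2" "u = cs ! i3" "v = cs ! i4"
    by (auto simp: in_set_conv_nth)
  have di: "distinct [i1, i2, i3, i4]" using True ix by auto
  have gx: "x = rotate1 cs ! ?g i1" "y = rotate1 cs ! ?g i2"
      "u = rotate1 cs ! ?g i3" "v = rotate1 cs ! ?g i4"
    using ix by (simp_all add: nth_rotate1_cyc_pred)
  have gl: "?g i1 < length (rotate1 cs)" "?g i2 < length (rotate1 cs)"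
      "?g i3 < length (rotate1 cs)" "?g i4 < length (rotate1 cs)"
    using ix by (simp_all add: cyc_pred_less)
  have gdi: "distinct [?g i1, ?g i2, ?g i3, ?g i4]" using True gx by auto
  have "pairs_alternate (rotate1 cs) x y u v \<longleftrightarrow>
      cyclic_order (?g i1) (?g i3) (?g i2) \<noteq> cyclic_order (?g i1) (?g i4) (?g i2)"
    unfolding gx using pairs_alternate_nth[OF _ gl gdi] dist by simp
  also have "\<dots> \<longleftrightarrow> cyclic_order i1 i3 i2 \<noteq> cyclic_order i1 i4 i2"
    using cyclic_order_cyc_pred ix di by (simp add: distinct_length_2_or_more)
  also have "\<dots> \<longleftrightarrow> pairs_alternate cs x y u v"
    unfolding ix(5-8) using pairs_alternate_nth[OF dist ix(1-4) di] by simp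
  finally show ?thesis .
qed

lemma cycle_edges_rotate1: "cycle_edges (rotate1 cs) = cycle_edges cs"
proof -
  let ?n = "length cs" and ?e = "\<lambda>xs i. {xs ! i, xs ! (Suc i mod length xs)}"
  have as_image: "cycle_edges xs = ?e xs ` {..<length xs}" for xs :: "'a list"
    unfolding cycle_edges_def by auto
  have shift: "?e (rotate1 cs) i = ?e cs (Suc i mod ?n)" if "i < ?n" for i
  proof -
    have "Suc i mod ?n < ?n" using that by (intro mod_less_divisor) auto
    then show ?thesis using that by (simp add: nth_rotate1)
  qed
  have onto: "(\<lambda>i. Suc i mod ?n) ` {..<?n} = {..<?n}"
  proof
    show "(\<lambda>i. Suc i mod ?n) ` {..<?n} \<subseteq> {..<?n}" by (auto intro: mod_less_divisor)
    show "{..<?n} \<subseteq> (\<lambda>i. Suc i mod ?n) ` {..<?n}"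
    proof
      fix j assume "j \<in> {..<?n}"
      then have "j = Suc (cyc_pred ?n j) mod ?n" "cyc_pred ?n j \<in> {..<?n}"
        by (simp_all add: Suc_cyc_pred_mod cyc_pred_less)
      then show "j \<in> (\<lambda>i. Suc i mod ?n) ` {..<?n}" by (rule image_eqI)
    qed
  qed
  have "?e (rotate1 cs) ` {..<?n} = (\<lambda>i. ?e cs (Suc i mod ?n)) ` {..<?n}"
    using shift by (intro image_cong) auto
  also have "\<dots> = ?e cs ` {..<?n}"
    by (subst onto[symmetric]) (simp add: image_image)
  finally have "?e (rotate1 cs) ` {..<?n} = ?e cs ` {..<?n}" .
  then show ?thesis by (simp add: as_image)
qed

lemma pairs_alternate_rotate:
  "distinct cs \<Longrightarrow> pairs_alternate (rotate p cs) = pairs_alternate cs"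
  by (induction p) (auto simp: pairs_alternate_rotate1 fun_eq_iff)

lemma cycle_edges_rotate: "cycle_edges (rotate p cs) = cycle_edges cs"
  by (induction p) (auto simp: cycle_edges_rotate1)

lemma att_rotate: "att (rotate p cs) = att cs"
  unfolding att_def by (simp add: fun_eq_iff)

lemma conflict_component_rotate:
  assumes "distinct cs"
  shows "conflict_component V E (rotate p cs) K \<longleftrightarrow> conflict_component V E cs K"
proof -
  have "bridges V E (rotate p cs) = bridges V E cs"
    unfolding bridges_def by (simp add: cycle_edges_rotate)
  moreover have "conflict_rel V E (rotate p cs) = conflict_rel V E cs"
    unfolding conflict_rel_def sets_alternate_def
    using calculation assms by (simp add: att_rotate pairs_alternate_rotate)
  ultimately show ?thesis unfolding conflict_component_def by simp
qed

lemma cycle_edge_nth: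
  assumes "distinct cs" "i < length cs" "j < length cs" "{cs ! i, cs ! j} \<in> cycle_edges cs"
  shows "j = Suc i mod length cs \<or> i = Suc j mod length cs"
proof -
  obtain k where k: "k < length cs" "{cs ! i, cs ! j} = {cs ! k, cs ! (Suc k mod length cs)}"
    using assms(4) unfolding cycle_edges_def by auto
  have "Suc k mod length cs < length cs" using k(1) by (intro mod_less_divisor) auto
  with assms k show ?thesis by (auto simp: doubleton_eq_iff nth_eq_iff_index_eq)
qed

subsection \<open>Connectivity and components\<close>

lemma connected_set_closed_subset:
  assumes "connected_set E W" "z \<in> W" "z \<in> Z"
    and closed: "\<And>x y. x \<in> Z \<Longrightarrow> y \<in> W \<Longrightarrow> {x, y} \<in> E \<Longrightarrow> y \<in> Z"
  shows "W \<subseteq> Z"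
proof
  fix w assume "w \<in> W"
  with assms(1,2) have "(z, w) \<in> (adj_in E W)\<^sup>*" unfolding connected_set_def by blast
  then show "w \<in> Z"
  proof (induction rule: rtrancl_induct)
    case base
    show ?case using assms(3) .
  next
    case (step y w)
    then show ?case using closed unfolding adj_in_def by auto
  qed
qed

lemma component_of_subset: "component_of E U H \<Longrightarrow> H \<subseteq> U"
  and component_of_nonempty: "component_of E U H \<Longrightarrow> H \<noteq> {}"
  unfolding component_of_def by auto

lemma component_of_vertex:
  assumes "y \<in> U"
  obtains H where "component_of E U H" "y \<in> H"
  using assms unfolding component_of_def by blast

lemma component_of_step:
  assumes "component_of E U H" "h \<in> H" "y \<in> U" "{h, y} \<in> E"
  shows "y \<in> H"
proof -
  obtain v where v: "H = {u \<in> U. (v, u) \<in> (adj_in E U)\<^sup>*}"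
    using assms(1) unfolding component_of_def by blast
  have "(h, y) \<in> adj_in E U" using assms v unfolding adj_in_def by auto
  then show ?thesis using assms v by (auto intro: rtrancl_into_rtrancl)
qed

subsection \<open>Bridges\<close>

definition component_bridge :: "'a set set \<Rightarrow> 'a list \<Rightarrow> 'a set \<Rightarrow> 'a set \<times> 'a set set" where
  "component_bridge E cs H = (H \<union> {v \<in> set cs. \<exists>u\<in>H. {u, v} \<in> E}, {e \<in> E. e \<inter> H \<noteq> {}})"

lemma bridgesE:
  assumes "X \<in> bridges V E cs"
  obtains (chord) e where "X = (e, {e})" "e \<in> E" "e \<notin> cycle_edges cs" "e \<subseteq> set cs"
    | (component) H where "X = component_bridge E cs H" "component_of E (V - set cs) H"
  using assms unfolding bridges_def component_bridge_def by blast

lemma chord_in_bridges: "e \<in> E \<Longrightarrow> e \<notin> cycle_edges cs \<Longrightarrow> e \<subseteq> set cs \<Longrightarrow> (e, {e}) \<in> bridges V E cs"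
  and component_bridge_in_bridges:
    "component_of E (V - set cs) H \<Longrightarrow> component_bridge E cs H \<in> bridges V E cs"
  unfolding bridges_def component_bridge_def by blast+

lemma att_chord: "e \<subseteq> set cs \<Longrightarrow> att cs (e, {e}) = e"
  unfolding att_def by auto

lemma att_component_bridgeI:
  "v \<in> set cs \<Longrightarrow> u \<in> H \<Longrightarrow> {u, v} \<in> E \<Longrightarrow> v \<in> att cs (component_bridge E cs H)"
  unfolding att_def component_bridge_def by auto

(* In a 3-connected graph, a bridge whose attachments lie in a set S of at most two cycle
   vertices, missing some cycle vertex, is the chord S itself: a component bridge would be
   separated from that vertex by S. *)
lemma few_attachments_chord:
  assumes kc: "k_connected 3 V E" and sub: "set cs \<subseteq> V" and X: "X \<in> bridges V E cs"
    and att: "att cs X \<subseteq> S" and S: "S \<subseteq> set cs" "card S < 3"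
    and v: "v \<in> set cs" "v \<notin> S"
  shows "X = (S, {S}) \<and> card S = 2 \<and> S \<notin> cycle_edges cs"
  using X
proof (cases rule: bridgesE)
  case (chord e)
  obtain u w where uw: "e = {u, w}" "u \<noteq> w"
    using kc chord(2) unfolding k_connected_def simple_graph_def by blast
  have "e \<subseteq> S" using att chord by (simp add: att_chord)
  moreover have "finite S" using S(1) finite_subset by blast
  moreover have "card e = 2" using uw by simp
  ultimately have "e = S" using S(2) by (metis card_seteq less_Suc_eq_le numeral_3_eq_3 numeral_2_eq_2)
  with chord uw show ?thesis by simp
next
  case (component H)
  have conn: "connected_set E (V - S)"
    using kc S sub unfolding k_connected_def by auto
  have closed: "y \<in> H" if "x \<in> H" "y \<in> V - S" "{x, y} \<in> E" for x y
  proof (cases "y \<in> set cs")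
    case True
    then have "y \<in> att cs X" using that component(1) by (simp add: att_component_bridgeI)
    then show ?thesis using att that(2) by auto
  next
    case False
    then show ?thesis using component_of_step[OF component(2)] that by auto
  qed
  obtain h where "h \<in> H" using component_of_nonempty[OF component(2)] by blast
  moreover have "H \<subseteq> V - set cs" using component_of_subset[OF component(2)] .
  ultimately have "V - S \<subseteq> H"
    using connected_set_closed_subset[OF conn, of h H] closed S(1) by blast
  then show ?thesis using v sub \<open>H \<subseteq> V - set cs\<close> by blast
qed

subsection \<open>Conflict components\<close>

lemma conflict_componentE:
  assumes "conflict_component V E cs K"
  obtains X0 where "X0 \<in> bridges V E cs" "K = {Y. (X0, Y) \<in> (conflict_rel V E cs)\<^sup>*}"
  using assms unfolding conflict_component_def by blast

lemma conflict_component_member: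
  assumes "conflict_component V E cs K"
  obtains X0 where "X0 \<in> K" "X0 \<in> bridges V E cs"
  using assms by (elim conflict_componentE) auto

lemma conflict_component_closed:
  assumes "conflict_component V E cs K" "X \<in> K" "(X, Y) \<in> conflict_rel V E cs"
  shows "Y \<in> K"
  using assms by (elim conflict_componentE) (auto intro: rtrancl_into_rtrancl)

lemma conflict_component_bridges:
  assumes "conflict_component V E cs K" "X \<in> K"
  shows "X \<in> bridges V E cs"
proof -
  obtain X0 where X0: "X0 \<in> bridges V E cs" "(X0, X) \<in> (conflict_rel V E cs)\<^sup>*"
    using assms by (elim conflict_componentE) auto
  from X0(2) show ?thesis
  proof (cases rule: rtranclE)
    case base
    then show ?thesis using X0(1) by simp
  next
    case (step Z)
    then show ?thesis unfolding conflict_rel_def by auto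
  qed
qed

lemma separated_not_alternate:
  assumes "distinct cs"
    and sep: "(\<forall>i<length cs. (cs ! i \<in> P \<longrightarrow> i \<le> r) \<and> (cs ! i \<in> Q \<longrightarrow> r \<le> i)) \<or>
              (\<forall>i<length cs. (cs ! i \<in> P \<longrightarrow> r \<le> i) \<and> (cs ! i \<in> Q \<longrightarrow> i \<le> r))"
  shows "\<not> sets_alternate cs P Q"
proof
  assume "sets_alternate cs P Q"
  then obtain x y u v where "x \<in> P" "y \<in> P" "u \<in> Q" "v \<in> Q" and alt: "pairs_alternate cs x y u v"
    unfolding sets_alternate_def by blast
  moreover from alt obtain i1 i2 i3 i4 where
      ix: "i1 < length cs" "i2 < length cs" "i3 < length cs" "i4 < length cs"
      "x = cs ! i1" "y = cs ! i2" "u = cs ! i3" "v = cs ! i4"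
    unfolding pairs_alternate_def by (auto simp: in_set_conv_nth)
  ultimately have "i1 \<le> r \<and> i2 \<le> r \<and> r \<le> i3 \<and> r \<le> i4 \<or> r \<le> i1 \<and> r \<le> i2 \<and> i3 \<le> r \<and> i4 \<le> r"
    using sep by blast
  then have "\<not> inside_arc cs x y u" "\<not> inside_arc cs x y v"
    using ix assms by (auto simp: inside_arc_nth)
  then show False using alt unfolding pairs_alternate_def by simp
qed

lemma straddling_pairs_alternate:
  assumes "distinct cs" "j < r" "r < i" "i < length cs" "q < length cs" "q < j \<or> i < q"
  shows "pairs_alternate cs (cs ! j) (cs ! i) (cs ! q) (cs ! r)"
  using assms unfolding pairs_alternate_def by (auto simp: inside_arc_nth nth_eq_iff_index_eq)

definition attachment_span :: "'a list \<Rightarrow> 'a set \<Rightarrow> nat \<Rightarrow> nat \<Rightarrow> bool" where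
  "attachment_span cs A pb pa \<longleftrightarrow> pb < pa \<and> pa < length cs \<and> cs ! pb \<in> A \<and> cs ! pa \<in> A \<and>
     (\<forall>i<length cs. cs ! i \<in> A \<longrightarrow> pb \<le> i \<and> i \<le> pa)"

subsection \<open>The separation argument\<close>

lemma no_straddling_bridge:
  assumes dist: "distinct cs" and K: "conflict_component V E cs K"
    and span: "attachment_span cs (\<Union>X\<in>K. att cs X) pb pa"
    and Y: "Y \<in> bridges V E cs"
    and q: "q < length cs" "q < pb \<or> pa < q" "cs ! q \<in> att cs Y"
    and r: "pb < r" "r < pa" "cs ! r \<in> att cs Y"
  shows False
proof -
  let ?n = "length cs" and ?R = "conflict_rel V E cs"
  obtain X0 where X0: "X0 \<in> bridges V E cs" and K_def: "K = {Z. (X0, Z) \<in> ?R\<^sup>*}"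
    using K by (rule conflict_componentE)
  have in_span: "pb \<le> i \<and> i \<le> pa" if "X \<in> K" "i < ?n" "cs ! i \<in> att cs X" for X i
    using span that unfolding attachment_span_def by blast
  define left where "left X \<longleftrightarrow> (\<forall>i<?n. cs ! i \<in> att cs X \<longrightarrow> i \<le> r)" for X
  define right where "right X \<longleftrightarrow> (\<forall>i<?n. cs ! i \<in> att cs X \<longrightarrow> r \<le> i)" for X
  have Y_notin: "Y \<notin> K" using in_span q by fastforce
  have one_side: "left X \<or> right X" if X: "X \<in> K" for X
  proof (rule ccontr)
    assume "\<not> (left X \<or> right X)"
    then obtain i j where ij: "i < ?n" "cs ! i \<in> att cs X" "r < i" "j < ?n" "cs ! j \<in> att cs X" "j < r"
      unfolding left_def right_def by (auto simp: not_le)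
    have "pb \<le> j" "i \<le> pa" using in_span[OF X ij(1,2)] in_span[OF X ij(4,5)] by auto
    then have "pairs_alternate cs (cs ! j) (cs ! i) (cs ! q) (cs ! r)"
      using straddling_pairs_alternate[OF dist ij(6,3,1) q(1)] q(2) by auto
    then have "(X, Y) \<in> ?R"
      using ij q r X Y Y_notin conflict_component_bridges[OF K X]
      unfolding conflict_rel_def sets_alternate_def by blast
    then show False using conflict_component_closed[OF K X] Y_notin by blast
  qed
  have same_side: "(left X0 \<longrightarrow> left Z) \<and> (right X0 \<longrightarrow> right Z)" if "(X0, Z) \<in> ?R\<^sup>*" for Z
    using that
  proof (induction rule: rtrancl_induct)
    case base
    show ?case by simp
  next
    case (step Z Z')
    have "Z' \<in> K" using K_def step by (auto intro: rtrancl_into_rtrancl)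
    moreover have "sets_alternate cs (att cs Z) (att cs Z')"
      using step(2) unfolding conflict_rel_def by auto
    ultimately show ?case
      using one_side step.IH separated_not_alternate[OF dist, of "att cs Z" r "att cs Z'"]
      unfolding left_def right_def by blast
  qed
  obtain X1 where X1: "X1 \<in> K" "cs ! pa \<in> att cs X1"
    using span unfolding attachment_span_def by auto
  obtain X2 where X2: "X2 \<in> K" "cs ! pb \<in> att cs X2"
    using span unfolding attachment_span_def by auto
  have "pb < ?n" "pa < ?n" using span unfolding attachment_span_def by auto
  then have "\<not> left X1" "\<not> right X2"
    using X1(2) X2(2) r unfolding left_def right_def by (meson leD)+
  moreover have "X0 \<in> K" using K_def by simp
  ultimately show False using one_side same_side X1 X2 K_def by blast
qed

definition outside_span :: "nat \<Rightarrow> nat \<Rightarrow> nat \<Rightarrow> nat \<Rightarrow> bool" where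
  "outside_span n pb pa q \<longleftrightarrow> q < n \<and> (q < pb \<or> pa < q)"

definition outer_region :: "'a set \<Rightarrow> 'a set set \<Rightarrow> 'a list \<Rightarrow> nat \<Rightarrow> nat \<Rightarrow> 'a set" where
  "outer_region V E cs pb pa =
     {cs ! q | q. outside_span (length cs) pb pa q} \<union>
     \<Union> {H. component_of E (V - set cs) H \<and>
           (\<exists>h\<in>H. \<exists>q. outside_span (length cs) pb pa q \<and> {h, cs ! q} \<in> E)}"

lemma outer_regionE:
  assumes "x \<in> outer_region V E cs pb pa"
  obtains (arc) q where "outside_span (length cs) pb pa q" "x = cs ! q"
    | (component) H h q where "component_of E (V - set cs) H" "x \<in> H" "h \<in> H"
        "outside_span (length cs) pb pa q" "{h, cs ! q} \<in> E"
  using assms unfolding outer_region_def by blast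

lemma outer_edge_bridge:
  assumes dist: "distinct cs" and x: "x \<in> outer_region V E cs pb pa"
    and s: "pb < s" "s < pa" "pa < length cs" and edge: "{x, cs ! s} \<in> E"
  obtains Y q where "Y \<in> bridges V E cs" "outside_span (length cs) pb pa q"
    "cs ! q \<in> att cs Y" "cs ! s \<in> att cs Y"
  using x
proof (cases rule: outer_regionE)
  case (arc q)
  let ?n = "length cs" and ?e = "{cs ! q, cs ! s}"
  have q: "q < ?n" "q < pb \<or> pa < q" using arc(1) unfolding outside_span_def by auto
  have "?e \<notin> cycle_edges cs"
  proof
    assume "?e \<in> cycle_edges cs"
    moreover have "s < ?n" using s by simp
    ultimately have "s = Suc q mod ?n \<or> q = Suc s mod ?n" using cycle_edge_nth[OF dist q(1)] by blast
    then show False using q s by (auto simp: mod_Suc split: if_splits)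
  qed
  moreover have "?e \<subseteq> set cs" using q s by auto
  ultimately have "(?e, {?e}) \<in> bridges V E cs" using edge arc(2) by (simp add: chord_in_bridges)
  moreover have "att cs (?e, {?e}) = ?e" using \<open>?e \<subseteq> set cs\<close> by (rule att_chord)
  ultimately show ?thesis using that arc(1) by simp
next
  case (component H h q)
  have "cs ! q \<in> att cs (component_bridge E cs H)"
    using component outside_span_def by (intro att_component_bridgeI) auto
  moreover have "cs ! s \<in> att cs (component_bridge E cs H)"
    using component(2) edge s by (intro att_component_bridgeI) auto
  ultimately show ?thesis using that component(1,4) component_bridge_in_bridges by blast
qed

lemma outer_region_closed:
  assumes dist: "distinct cs" and K: "conflict_component V E cs K"
    and span: "attachment_span cs (\<Union>X\<in>K. att cs X) pb pa"
    and x: "x \<in> outer_region V E cs pb pa" and y: "y \<in> V - {cs ! pb, cs ! pa}"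
    and edge: "{x, y} \<in> E"
  shows "y \<in> outer_region V E cs pb pa"
proof (cases "y \<in> set cs")
  case True
  let ?n = "length cs"
  obtain s where s: "s < ?n" "cs ! s = y" using True unfolding in_set_conv_nth by blast
  have pb_pa: "pb < pa" "pa < ?n" using span unfolding attachment_span_def by auto
  show ?thesis
  proof (cases "outside_span ?n pb pa s")
    case True
    then show ?thesis using s unfolding outer_region_def by blast
  next
    case False
    moreover have "s \<noteq> pb" "s \<noteq> pa" using s y by auto
    ultimately have s_in: "pb < s" "s < pa" using s(1) unfolding outside_span_def by auto
    obtain Y q where "Y \<in> bridges V E cs" "outside_span ?n pb pa q" "cs ! q \<in> att cs Y"
        "cs ! s \<in> att cs Y"
      using outer_edge_bridge[OF dist x s_in pb_pa(2)] edge s(2) by blast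
    then show ?thesis
      using no_straddling_bridge[OF dist K span] s_in unfolding outside_span_def by blast
  qed
next
  case False
  then have yU: "y \<in> V - set cs" using y by auto
  from x show ?thesis
  proof (cases rule: outer_regionE)
    case (arc q)
    obtain H where H: "component_of E (V - set cs) H" "y \<in> H"
      using yU by (rule component_of_vertex)
    have "{y, cs ! q} \<in> E" using edge arc(2) by (simp add: insert_commute)
    then show ?thesis using H arc(1) unfolding outer_region_def by blast
  next
    case (component H h q)
    have "y \<in> H" using component(1,2) yU edge by (rule component_of_step)
    then show ?thesis using component unfolding outer_region_def by blast
  qed
qed

(* In a 3-connected graph the span of att(K) consists of two consecutive positions
   (when it does not contain position 0): otherwise the outer region, which contains cs ! 0,
   would be all of the connected graph F - {cs ! pb, cs ! pa}, yet it misses cs ! (pb + 1). *)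
lemma attachment_span_adjacent:
  assumes kc: "k_connected 3 V E" and dist: "distinct cs" and sub: "set cs \<subseteq> V"
    and K: "conflict_component V E cs K"
    and span: "attachment_span cs (\<Union>X\<in>K. att cs X) pb pa" and pb0: "0 < pb"
  shows "pa = Suc pb"
proof (rule ccontr)
  assume "pa \<noteq> Suc pb"
  let ?n = "length cs" and ?W = "V - {cs ! pb, cs ! pa}" and ?Z = "outer_region V E cs pb pa"
  have pb_pa: "pb < pa" "pa < ?n" using span unfolding attachment_span_def by auto
  have "card {cs ! pb, cs ! pa} < 3" "{cs ! pb, cs ! pa} \<subseteq> V"
    using sub pb_pa by (auto simp: card_insert_if)
  then have conn: "connected_set E ?W" using kc unfolding k_connected_def by blast
  have in_W: "cs ! i \<in> ?W" if "i < ?n" "i \<noteq> pb" "i \<noteq> pa" for i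
    using that pb_pa sub dist nth_mem[OF that(1)] by (auto simp: nth_eq_iff_index_eq)
  have "cs ! 0 \<in> ?W" using in_W[of 0] pb0 pb_pa by fastforce
  moreover have "cs ! 0 \<in> ?Z" using pb0 pb_pa unfolding outer_region_def outside_span_def by auto
  ultimately have "?W \<subseteq> ?Z"
    using connected_set_closed_subset[OF conn] outer_region_closed[OF dist K span] by blast
  moreover have "cs ! Suc pb \<in> ?W" using in_W \<open>pa \<noteq> Suc pb\<close> pb_pa by simp
  moreover have "cs ! Suc pb \<notin> ?Z"
    using \<open>pa \<noteq> Suc pb\<close> pb_pa dist component_of_subset
    unfolding outer_region_def outside_span_def by (fastforce simp: nth_eq_iff_index_eq)
  ultimately show False by blast
qed

lemma attachment_span_exists:
  assumes "A \<subseteq> set cs" "x \<in> A" "y \<in> A" "x \<noteq> y"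
  obtains pb pa where "attachment_span cs A pb pa"
proof -
  define PA where "PA = {i. i < length cs \<and> cs ! i \<in> A}"
  have "x \<in> set cs" "y \<in> set cs" using assms by auto
  then obtain ix iy where "ix < length cs" "cs ! ix = x" "iy < length cs" "cs ! iy = y"
    unfolding in_set_conv_nth by blast
  then have ixy: "ix \<in> PA" "iy \<in> PA" "ix \<noteq> iy" using assms unfolding PA_def by auto
  have fin: "finite PA" unfolding PA_def by simp
  have "Min PA \<in> PA" "Max PA \<in> PA" using fin ixy by (auto intro: Min_in Max_in)
  moreover have bounds: "Min PA \<le> i \<and> i \<le> Max PA" if "i \<in> PA" for i
    using fin that by simp
  moreover have "Min PA < Max PA"
    using bounds[OF ixy(1)] bounds[OF ixy(2)] ixy(3) by linarith
  ultimately have "attachment_span cs A (Min PA) (Max PA)"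
    unfolding attachment_span_def PA_def by auto
  then show ?thesis by (rule that)
qed

(* att(K) cannot consist of just the two ends of a cycle edge: 3-connectivity forces the
   bridges of K to be chords on these two vertices, but the only such chord is the cycle edge. *)
lemma attachments_not_cycle_edge:
  assumes kc: "k_connected 3 V E" and sub: "set cs \<subseteq> V" and K: "conflict_component V E cs K"
    and span: "attachment_span cs (\<Union>X\<in>K. att cs X) pb (Suc pb)"
    and v: "v \<in> set cs" "v \<notin> (\<Union>X\<in>K. att cs X)"
  shows False
proof -
  let ?n = "length cs" and ?A = "\<Union>X\<in>K. att cs X"
  define S where "S = {cs ! pb, cs ! Suc pb}"
  obtain X0 where X0: "X0 \<in> K" "X0 \<in> bridges V E cs" using K by (rule conflict_component_member)
  have "att cs X0 \<subseteq> S"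
  proof
    fix z assume "z \<in> att cs X0"
    then have "z \<in> ?A" "z \<in> set cs" using X0(1) unfolding att_def by auto
    moreover from \<open>z \<in> set cs\<close> obtain i where "i < ?n" "cs ! i = z"
      unfolding in_set_conv_nth by blast
    ultimately have "pb \<le> i" "i \<le> Suc pb" using span unfolding attachment_span_def by auto
    then show "z \<in> S" using \<open>cs ! i = z\<close> unfolding S_def by (auto simp: le_Suc_eq)
  qed
  moreover have "S \<subseteq> ?A" using span unfolding S_def attachment_span_def by auto
  then have "S \<subseteq> set cs" "v \<notin> S" using v unfolding att_def by auto
  moreover have "card S < 3" unfolding S_def by (simp add: card_insert_if)
  ultimately have "S \<notin> cycle_edges cs" using few_attachments_chord[OF kc sub X0(2) _ _ _ v(1)] by blast
  moreover have "S \<in> cycle_edges cs"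
    using span unfolding S_def cycle_edges_def attachment_span_def by force
  ultimately show False by contradiction
qed

lemma first_vertex_attached:
  assumes kc: "k_connected 3 V E" and dist: "distinct cs" and sub: "set cs \<subseteq> V"
    and K: "conflict_component V E cs K" and ne: "cs \<noteq> []"
  shows "cs ! 0 \<in> (\<Union>X\<in>K. att cs X)"
proof (rule ccontr)
  define A where "A = (\<Union>X\<in>K. att cs X)"
  assume "cs ! 0 \<notin> (\<Union>X\<in>K. att cs X)"
  then have miss: "cs ! 0 \<notin> A" unfolding A_def .
  have v: "cs ! 0 \<in> set cs" using ne by simp
  have A_sub: "A \<subseteq> set cs" unfolding A_def att_def by auto
  show False
  proof (cases "card A < 2")
    case True
    obtain X0 where "X0 \<in> K" "X0 \<in> bridges V E cs" using K by (rule conflict_component_member)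
    moreover from \<open>X0 \<in> K\<close> have "att cs X0 \<subseteq> A" unfolding A_def by auto
    ultimately show False using few_attachments_chord[OF kc sub _ _ A_sub _ v miss] True by simp
  next
    case False
    have "finite A" using A_sub finite_subset by blast
    with False obtain x y where "x \<in> A" "y \<in> A" "x \<noteq> y"
      using card_le_Suc0_iff_eq[of A] by fastforce
    with A_sub obtain pb pa where span: "attachment_span cs A pb pa"
      by (rule attachment_span_exists)
    then have "0 < pb" using miss unfolding attachment_span_def by (cases pb) auto
    with span have "pa = Suc pb"
      unfolding A_def by (rule attachment_span_adjacent[OF kc dist sub K])
    then show False
      using attachments_not_cycle_edge[OF kc sub K _ v] span miss unfolding A_def by simp
  qed
qed

theorem mainTheorem8:
  fixes V :: "'a set" and E :: "'a set set" and cs :: "'a list"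
    and K :: "('a set \<times> 'a set set) set"
  assumes "k_connected 3 V E"
    and "is_cycle V E cs" and "length cs \<ge> 4"
    and "conflict_component V E cs K"
  shows "set cs \<subseteq> (\<Union>X\<in>K. att cs X)"
proof
  fix v assume "v \<in> set cs"
  then obtain p where p: "p < length cs" "cs ! p = v" by (auto simp: in_set_conv_nth)
  have dist: "distinct cs" and sub: "set cs \<subseteq> V" using assms(2) unfolding is_cycle_def by auto
  define ds where "ds = rotate p cs"
  have "ds ! 0 = v" using p nth_rotate[of 0 cs p] unfolding ds_def by fastforce
  moreover have "ds ! 0 \<in> (\<Union>X\<in>K. att ds X)"
  proof (rule first_vertex_attached[OF assms(1)])
    show "distinct ds" "set ds \<subseteq> V" "ds \<noteq> []" using dist sub p unfolding ds_def by auto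
    show "conflict_component V E ds K"
      using assms(4) conflict_component_rotate[OF dist] unfolding ds_def by simp
  qed
  ultimately show "v \<in> (\<Union>X\<in>K. att cs X)" unfolding ds_def att_rotate by simp
qed

end
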